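(* Let $\mathcal H$ be an infinite-dimensional Hilbert space over $\mathbb C$. Let $X_1,\dots,X_\ell$ be variables for elements of $\mathcal B(\mathcal H)$, $\iota:[k]\to[\ell]$, $\tau:[k]\to\{1,*\}$, and $P=\prod_{i\in[k]}X_{\iota(i)}^{\tau(i)}$. Then $P$ is real-eigenvalued over $\mathcal H$ if and only if $P$ is self-adjoint.
   Context: $\mathcal B(\mathcal H)$ is the set of bounded linear operators $\mathcal H\to\mathcal H$, and $X^*$ denotes the adjoint operator. Formal adjoint acts on words by $(X_i^1)^*=X_i^*$, $(X_i^* )^*=X_i$, $(W_1W_2)^*=W_2^*W_1^*$. $P$ is real-eigenvalued over $\mathcal H$ if for every assignment of operators $A_1,\dots,A_\ell\in\mathcal B(\mathcal H)$ to $X_1,\dots,X_\ell$ (with $A_i^*$ substituted for $X_i^*$), every eigenvalue of the resulting product operator is real. $P$ is self-adjoint (a purely formal notion) if $k$ is even and there exists $j\in[k]$ such that, with indices modulo $k$, $\prod_{i=j+1}^{j+k}X_{\iota(i)}^{\tau(i)}=LL^*$ as formal words, where $L=\prod_{i=j+1}^{j+k/2}X_{\iota(i)}^{\tau(i)}$. *)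

theory Defs
  imports Complex_Main
begin

text \<open>A complex inner product space, complete w.r.t. the induced norm.
  Inner product is conjugate-linear in the first and linear in the second argument.\<close>

class complex_hilbert = ab_group_add +
  fixes scaleC :: "complex \<Rightarrow> 'a \<Rightarrow> 'a"
    and cinner :: "'a \<Rightarrow> 'a \<Rightarrow> complex"
  assumes scaleC_add_right: "scaleC a (x + y) = scaleC a x + scaleC a y"
    and scaleC_add_left: "scaleC (a + b) x = scaleC a x + scaleC b x"
    and scaleC_scaleC: "scaleC a (scaleC b x) = scaleC (a * b) x"
    and scaleC_one: "scaleC 1 x = x"
    and cinner_commute: "cinner x y = cnj (cinner y x)"
    and cinner_add_right: "cinner x (y + z) = cinner x y + cinner x z"
    and cinner_scaleC_right: "cinner x (scaleC a y) = a * cinner x y"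
    and cinner_self_nonneg: "Im (cinner x x) = 0 \<and> Re (cinner x x) \<ge> 0"
    and cinner_self_eq_zero: "cinner x x = 0 \<longleftrightarrow> x = 0"
    and cinner_complete:
      "(\<forall>e>0. \<exists>N::nat. \<forall>m\<ge>N. \<forall>n\<ge>N. sqrt (Re (cinner (X m - X n) (X m - X n))) < e)
        \<Longrightarrow> (\<exists>L. \<forall>e>0. \<exists>N::nat. \<forall>n\<ge>N. sqrt (Re (cinner (X n - L) (X n - L))) < e)"

definition cnorm :: "'a::complex_hilbert \<Rightarrow> real" where
  "cnorm x = sqrt (Re (cinner x x))"

definition infinite_dimensional :: "'a::complex_hilbert itself \<Rightarrow> bool" where
  "infinite_dimensional _ \<longleftrightarrow>
     \<not> (\<exists>B::'a set. finite B \<and> (\<forall>x. \<exists>c. x = (\<Sum>b\<in>B. scaleC (c b) b)))"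

definition bounded_op :: "('a::complex_hilbert \<Rightarrow> 'a) \<Rightarrow> bool" where
  "bounded_op A \<longleftrightarrow> (\<forall>x y. A (x + y) = A x + A y) \<and> (\<forall>c x. A (scaleC c x) = scaleC c (A x))
     \<and> (\<exists>K. \<forall>x. cnorm (A x) \<le> K * cnorm x)"

text \<open>Adjoint: the operator \<open>B\<close> with \<open>\<langle>A x, y\<rangle> = \<langle>x, B y\<rangle>\<close> (unique; exists for bounded \<open>A\<close>).\<close>
definition adjoint :: "('a::complex_hilbert \<Rightarrow> 'a) \<Rightarrow> ('a \<Rightarrow> 'a)" where
  "adjoint A = (SOME B. \<forall>x y. cinner (A x) y = cinner x (B y))"

definition eigenvalue :: "('a::complex_hilbert \<Rightarrow> 'a) \<Rightarrow> complex \<Rightarrow> bool" where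
  "eigenvalue A mu \<longleftrightarrow> (\<exists>x. x \<noteq> 0 \<and> A x = scaleC mu x)"

datatype exponent = One | Star

text \<open>A letter \<open>(i, t)\<close> stands for \<open>X_i^t\<close>; a word \<open>P = \<Prod>X_{\<iota>(i)}^{\<tau>(i)}\<close> is the list of letters.\<close>
type_synonym letter = "nat \<times> exponent"

fun flip_exp :: "exponent \<Rightarrow> exponent" where
  "flip_exp One = Star" | "flip_exp Star = One"

definition word_adj :: "letter list \<Rightarrow> letter list" where
  "word_adj w = rev (map (\<lambda>(i, t). (i, flip_exp t)) w)"

definition formally_self_adjoint :: "letter list \<Rightarrow> bool" where
  "formally_self_adjoint w \<longleftrightarrow> even (length w) \<and>
     (\<exists>j<length w. let r = rotate j w; L = take (length w div 2) r in r = L @ word_adj L)"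

fun apply_exp :: "('a::complex_hilbert \<Rightarrow> 'a) \<Rightarrow> exponent \<Rightarrow> ('a \<Rightarrow> 'a)" where
  "apply_exp A One = A" | "apply_exp A Star = adjoint A"

text \<open>The operator obtained by substituting \<open>A i\<close> for \<open>X_i\<close> (product = composition, leftmost factor outermost).\<close>
definition eval_word :: "(nat \<Rightarrow> ('a::complex_hilbert \<Rightarrow> 'a)) \<Rightarrow> letter list \<Rightarrow> ('a \<Rightarrow> 'a)" where
  "eval_word A w = foldr (\<lambda>(i, t) f. apply_exp (A i) t \<circ> f) w id"

definition real_eigenvalued :: "'a::complex_hilbert itself \<Rightarrow> nat \<Rightarrow> letter list \<Rightarrow> bool" where
  "real_eigenvalued _ l w \<longleftrightarrow>
     (\<forall>A :: nat \<Rightarrow> ('a \<Rightarrow> 'a). (\<forall>i<l. bounded_op (A i)) \<longrightarrow>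
        (\<forall>mu. eigenvalue (eval_word A w) mu \<longrightarrow> mu \<in> \<real>))"

end

(* If a rotation of w has the form L L^*, then every eigenvalue mu \<noteq> 0 of the operator P is
   also an eigenvalue of the rotated product L L^* (U V and V U share their nonzero
   eigenvalues), and <L^* v, L^* v> = mu <v, v> forces mu to be real.

   Conversely, let k be the length of w and put its letters on the edges p \<rightarrow> p + 1 of a
   k-cycle. Let X_i act on C^k as x = exp (i pi / 2k) times the forward shift along the edges
   carrying X_i plus conj x times the backward shift along the edges carrying X_i^*. Then
   every letter of w, starred or not, moves forward along an edge carrying it with weight x
   and backward along an edge carrying its adjoint with weight conj x. Expanding the trace of
   P over closed walks, a walk winding m times around the cycle contributes a nonnegative
   multiple of x^(m k). Winding 0 gives real terms; winding -1 is only possible if w is the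
   formal adjoint of one of its rotations, which makes w formally self-adjoint; winding 1
   gives nonnegative multiples of x^k = i, and the walk reading w once around the cycle
   contributes i. So Im (tr P) \<ge> 1 and P has a non-real eigenvalue. An orthonormal family of
   length k carries this example into the infinite-dimensional space. *)

theory Submission
  imports Defs "Jordan_Normal_Form.Schur_Decomposition" "HOL-Number_Theory.Cong"
begin

hide_const (open) Char_Poly.eigenvalue
hide_fact (open) Char_Poly.eigenvalue_def

section \<open>Complex inner product spaces\<close>

global_interpretation cvec: vector_space "scaleC :: complex \<Rightarrow> 'a \<Rightarrow> 'a::complex_hilbert"
  by unfold_locales (fact scaleC_add_right scaleC_add_left scaleC_scaleC scaleC_one)+

lemma cinner_zero_right [simp]: "cinner x 0 = 0"
  using cinner_add_right[of x 0 0] by simp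

lemma cinner_zero_left [simp]: "cinner 0 x = 0"
  using cinner_commute[of 0 x] by simp

lemma cinner_add_left: "cinner (x + y) z = cinner x z + cinner y z"
  by (metis cinner_add_right cinner_commute complex_cnj_add)

lemma cinner_scaleC_left: "cinner (scaleC a x) y = cnj a * cinner x y"
  by (metis cinner_commute cinner_scaleC_right complex_cnj_mult)

lemma cinner_diff_right: "cinner x (y - z) = cinner x y - cinner x z"
  using cinner_add_right[of x "y - z" z] by simp

lemma cinner_diff_left: "cinner (x - y) z = cinner x z - cinner y z"
  using cinner_add_left[of "x - y" y z] by simp

lemma cinner_sum_right: "cinner x (sum f A) = (\<Sum>i\<in>A. cinner x (f i))"
  by (induction A rule: infinite_finite_induct) (auto simp: cinner_add_right)

lemma cinner_sum_left: "cinner (sum f A) x = (\<Sum>i\<in>A. cinner (f i) x)"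
  by (induction A rule: infinite_finite_induct) (auto simp: cinner_add_left)

lemmas cinner_simps = cinner_add_left cinner_add_right cinner_diff_left cinner_diff_right
  cinner_scaleC_left cinner_scaleC_right

lemma cinner_ext: "(\<And>x. cinner x a = cinner x b) \<Longrightarrow> a = b"
  using cinner_self_eq_zero[of "a - b"] by (simp add: cinner_diff_right)

lemma cinner_self_eq_cnorm_sq: "cinner x x = of_real (cnorm x ^ 2)"
  using cinner_self_nonneg[of x] by (simp add: cnorm_def complex_eq_iff)

lemma cnorm_nonneg [simp]: "cnorm x \<ge> 0"
  by (simp add: cnorm_def cinner_self_nonneg)

lemma cnorm_eq_0_iff [simp]: "cnorm x = 0 \<longleftrightarrow> x = 0"
  using cinner_self_eq_cnorm_sq[of x] cinner_self_eq_zero[of x] by simp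

lemma cnorm_zero [simp]: "cnorm 0 = 0"
  by simp

lemma cnorm_power2: "cnorm x ^ 2 = Re (cinner x x)"
  by (simp add: cnorm_def cinner_self_nonneg)

lemma cnorm_scaleC: "cnorm (scaleC c x) = cmod c * cnorm x"
proof -
  have "cnorm (scaleC c x) ^ 2 = Re (c * cnj c * cinner x x)"
    by (simp add: cnorm_power2 cinner_simps mult_ac)
  also have "\<dots> = (cmod c * cnorm x) ^ 2"
    by (simp only: complex_norm_square[symmetric] cinner_self_eq_cnorm_sq of_real_mult[symmetric]
        Re_complex_of_real power_mult_distrib)
  finally show ?thesis
    by simp
qed

lemma cnorm_minus_commute: "cnorm (x - y) = cnorm (y - x)"
  using cnorm_scaleC[of "-1" "x - y"] by (simp add: cvec.scale_right_diff_distrib)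

lemma cnorm_diff_projection_sq:
  assumes "y \<noteq> 0"
  shows "cnorm (x - scaleC (cinner y x / cinner y y) y) ^ 2
           = cnorm x ^ 2 - (cmod (cinner y x)) ^ 2 / cnorm y ^ 2"
proof -
  define b c where "b = cinner y y" and "c = cinner y x"
  have b: "b = of_real (cnorm y ^ 2)" "b \<noteq> 0"
    using assms by (simp_all add: b_def cinner_self_eq_cnorm_sq)
  then have "cnj b = b"
    by simp
  then have "cinner (x - scaleC (c / b) y) (x - scaleC (c / b) y) = cinner x x - c * cnj c / b"
    using b(2) by (simp add: cinner_simps b_def[symmetric] c_def[symmetric] cinner_commute[of x y]
        field_simps)
  moreover have "c * cnj c / b = of_real ((cmod c) ^ 2 / cnorm y ^ 2)"
    by (simp add: b(1) flip: complex_norm_square)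
  ultimately show ?thesis
    by (simp add: cnorm_power2 c_def b_def)
qed

lemma cauchy_schwarz: "cmod (cinner x y) \<le> cnorm x * cnorm y"
proof (cases "x = 0")
  case False
  have "0 \<le> cnorm (y - scaleC (cinner x y / cinner x x) x) ^ 2"
    by (rule zero_le_power2)
  then have "(cmod (cinner x y)) ^ 2 / cnorm x ^ 2 \<le> cnorm y ^ 2"
    unfolding cnorm_diff_projection_sq[OF False] by simp
  then have "(cmod (cinner x y)) ^ 2 \<le> (cnorm x * cnorm y) ^ 2"
    using False by (simp add: divide_le_eq power_mult_distrib mult.commute)
  then show ?thesis
    by (rule power2_le_imp_le) simp
qed simp

lemma cnorm_triangle: "cnorm (x + y) \<le> cnorm x + cnorm y"
proof -
  have "cnorm (x + y) ^ 2 = cnorm x ^ 2 + 2 * Re (cinner x y) + cnorm y ^ 2"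
    by (simp add: cnorm_power2 cinner_simps cinner_commute[of y x])
  also have "\<dots> \<le> (cnorm x + cnorm y) ^ 2"
    using cauchy_schwarz[of x y] complex_Re_le_cmod[of "cinner x y"]
    by (simp add: power2_sum)
  finally show ?thesis
    by (rule power2_le_imp_le) simp
qed

lemma cnorm_triangle_diff: "cnorm (x - z) \<le> cnorm (x - y) + cnorm (y - z)"
  using cnorm_triangle[of "x - y" "y - z"] by simp

lemma cnorm_sum_le: "cnorm (sum f A) \<le> (\<Sum>i\<in>A. cnorm (f i))"
  by (induction A rule: infinite_finite_induct) (auto intro: order_trans[OF cnorm_triangle])

lemma parallelogram_law: "cnorm (x + y) ^ 2 + cnorm (x - y) ^ 2 = 2 * cnorm x ^ 2 + 2 * cnorm y ^ 2"
  by (simp add: cnorm_power2 cinner_simps)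

section \<open>Riesz representation and adjoints\<close>

lemma cnorm_Cauchy_convergent:
  assumes "\<And>m n. cnorm (X m - X n) \<le> b m + b n" and "b \<longlonglongrightarrow> 0"
  obtains L where "(\<lambda>n. cnorm (X n - L)) \<longlonglongrightarrow> 0"
proof -
  have "\<exists>N. \<forall>m\<ge>N. \<forall>n\<ge>N. cnorm (X m - X n) < e" if "e > 0" for e
  proof -
    obtain N where "\<forall>n\<ge>N. b n < e / 2"
      using order_tendstoD(2)[OF assms(2), of "e / 2"] \<open>e > 0\<close> by (auto simp: eventually_sequentially)
    then show ?thesis
      using assms(1) by (smt (verit) field_sum_of_halves)
  qed
  then obtain L where "\<forall>e>0. \<exists>N. \<forall>n\<ge>N. cnorm (X n - L) < e"
    using cinner_complete[of X] unfolding cnorm_def by blast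
  then have "(\<lambda>n. cnorm (X n - L)) \<longlonglongrightarrow> 0"
    by (intro LIMSEQ_I) simp
  then show ?thesis
    using that by blast
qed

lemma cnorm_diff_sq_le_midpoint:
  assumes "d \<le> cnorm (z - scaleC (1/2) (a + b)) ^ 2"
  shows "cnorm (a - b) ^ 2 \<le> 2 * cnorm (z - a) ^ 2 + 2 * cnorm (z - b) ^ 2 - 4 * d"
proof -
  have "scaleC 2 z = z + z"
    by (metis one_add_one scaleC_add_left scaleC_one)
  then have "(z - a) + (z - b) = scaleC 2 (z - scaleC (1/2) (a + b))"
    by (simp add: cvec.scale_right_diff_distrib)
  then have "cnorm ((z - a) + (z - b)) ^ 2 = 4 * cnorm (z - scaleC (1/2) (a + b)) ^ 2"
    by (simp add: cnorm_scaleC power_mult_distrib)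
  moreover have "cnorm ((z - a) - (z - b)) = cnorm (a - b)"
    by (simp add: cnorm_minus_commute)
  ultimately show ?thesis
    using parallelogram_law[of "z - a" "z - b"] assms by simp
qed

lemma minimizing_sequence_convergent:
  assumes N: "cvec.subspace N" and d: "\<And>v. v \<in> N \<Longrightarrow> d \<le> cnorm (z - v) ^ 2"
    and X: "\<And>n. X n \<in> N" "\<And>n. cnorm (z - X n) ^ 2 \<le> d + e n" and "e \<longlonglongrightarrow> 0"
  obtains L where "(\<lambda>n. cnorm (X n - L)) \<longlonglongrightarrow> 0"
proof -
  have e: "0 \<le> e n" for n
    using d[OF X(1)] X(2) by (smt (verit))
  define b where "b n = sqrt (2 * e n)" for n
  have "cnorm (X m - X n) \<le> b m + b n" for m n
  proof -
    have "scaleC (1/2) (X m + X n) \<in> N"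
      using N X(1) by (simp add: cvec.subspace_add cvec.subspace_scale)
    then have "cnorm (X m - X n) ^ 2 \<le> 2 * e m + 2 * e n"
      using cnorm_diff_sq_le_midpoint[OF d] X(2)[of m] X(2)[of n] by fastforce
    also have "\<dots> \<le> (b m + b n) ^ 2"
      using e[of m] e[of n] by (simp add: b_def power2_sum)
    finally show ?thesis
      by (rule power2_le_imp_le) (simp add: b_def e)
  qed
  moreover have "b \<longlonglongrightarrow> sqrt (2 * 0)"
    unfolding b_def by (intro tendsto_intros \<open>e \<longlonglongrightarrow> 0\<close>)
  ultimately show ?thesis
    using that cnorm_Cauchy_convergent by (metis mult_zero_right real_sqrt_zero)
qed

lemma nearest_point_in_closed_subspace:
  assumes N: "cvec.subspace N"
    and closed: "\<And>X L. \<forall>n. X n \<in> N \<Longrightarrow> (\<lambda>n. cnorm (X n - L)) \<longlonglongrightarrow> 0 \<Longrightarrow> L \<in> N"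
  obtains p where "p \<in> N" "\<And>v. v \<in> N \<Longrightarrow> cnorm (z - p) \<le> cnorm (z - v)"
proof -
  define d where "d = Inf ((\<lambda>v. cnorm (z - v) ^ 2) ` N)"
  have "0 \<in> N"
    using N by (rule cvec.subspace_0)
  then have d_le: "d \<le> cnorm (z - v) ^ 2" if "v \<in> N" for v
    unfolding d_def using that by (intro cInf_lower bdd_belowI[of _ 0]) auto
  define e :: "nat \<Rightarrow> real" where "e n = inverse (Suc n)" for n
  have "\<exists>v\<in>N. cnorm (z - v) ^ 2 < d + e n" for n
    using cInf_lessD[of "(\<lambda>v. cnorm (z - v) ^ 2) ` N" "d + e n"] \<open>0 \<in> N\<close>
    unfolding d_def e_def by auto
  then obtain X where X: "\<And>n. X n \<in> N" "\<And>n. cnorm (z - X n) ^ 2 \<le> d + e n"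
    by (metis less_imp_le)
  have "e \<longlonglongrightarrow> 0"
    unfolding e_def using LIMSEQ_inverse_real_of_nat by simp
  then obtain L where L: "(\<lambda>n. cnorm (X n - L)) \<longlonglongrightarrow> 0"
    using minimizing_sequence_convergent[of N d z X e, OF N d_le X(1,2) \<open>e \<longlonglongrightarrow> 0\<close>] by blast
  have "cnorm (z - L) \<le> sqrt (d + e n) + cnorm (X n - L)" for n
    using cnorm_triangle_diff[of z L "X n"] real_le_rsqrt[OF X(2)[of n]] by simp
  moreover have "(\<lambda>n. sqrt (d + e n) + cnorm (X n - L)) \<longlonglongrightarrow> sqrt (d + 0) + 0"
    by (intro tendsto_intros \<open>e \<longlonglongrightarrow> 0\<close> L)
  ultimately have "cnorm (z - L) \<le> sqrt d"
    by (intro LIMSEQ_le_const) auto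
  then have "cnorm (z - L) \<le> cnorm (z - v)" if "v \<in> N" for v
    using real_sqrt_le_mono[OF d_le[OF that]] by simp
  then show ?thesis
    using that closed[OF allI[OF X(1)] L] by blast
qed

lemma nearest_point_orthogonal:
  assumes N: "cvec.subspace N" and "p \<in> N" "v \<in> N"
    and nearest: "\<And>v. v \<in> N \<Longrightarrow> cnorm (z - p) \<le> cnorm (z - v)"
  shows "cinner (z - p) v = 0"
proof (cases "v = 0")
  case False
  define t where "t = cinner v (z - p) / cinner v v"
  have "p + scaleC t v \<in> N"
    using N assms(2,3) by (simp add: cvec.subspace_add cvec.subspace_scale)
  then have "cnorm (z - p) \<le> cnorm ((z - p) - scaleC t v)"
    using nearest[of "p + scaleC t v"] by (simp add: diff_diff_eq)
  then have "cnorm (z - p) ^ 2 \<le> cnorm ((z - p) - scaleC t v) ^ 2"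
    by (simp add: power_mono)
  then have "(cmod (cinner v (z - p))) ^ 2 / cnorm v ^ 2 \<le> 0"
    unfolding t_def cnorm_diff_projection_sq[OF False] by linarith
  then have "cinner v (z - p) = 0"
    using False by (simp add: divide_le_0_iff)
  then show ?thesis
    by (metis cinner_commute complex_cnj_zero)
qed simp

lemma bounded_functional_zero_limit:
  assumes add: "\<And>x y. f (x + y) = f x + f y" and bounded: "\<And>x. cmod (f x) \<le> K * cnorm x"
    and "\<forall>n. f (X n) = 0" and "(\<lambda>n. cnorm (X n - L)) \<longlonglongrightarrow> 0"
  shows "f L = 0"
proof -
  have "f (X n - L) = - f L" for n
    using add[of "X n - L" L] assms(3) by (simp add: eq_neg_iff_add_eq_0)
  then have "cmod (f L) \<le> K * cnorm (X n - L)" for n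
    using bounded[of "X n - L"] by simp
  moreover have "(\<lambda>n. K * cnorm (X n - L)) \<longlonglongrightarrow> K * 0"
    by (intro tendsto_intros assms(4))
  ultimately have "cmod (f L) \<le> 0"
    by (intro LIMSEQ_le_const) auto
  then show ?thesis
    by simp
qed

lemma riesz_representation:
  assumes add: "\<And>x y. f (x + y) = f x + f y"
    and hom: "\<And>c x. f (scaleC c x) = c * f x"
    and bounded: "\<And>x. cmod (f x) \<le> K * cnorm x"
  obtains u where "\<And>x. f x = cinner u x"
proof (cases "\<forall>x. f x = 0")
  case True
  then show ?thesis
    using that[of 0] by simp
next
  case False
  then obtain z where "f z \<noteq> 0"
    by blast
  have diff: "f (x - y) = f x - f y" for x y
    using add[of "x - y" y] by simp
  define N where "N = {x. f x = 0}"
  have N: "cvec.subspace N"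
    using hom[of 0 0] by (auto simp: cvec.subspace_def N_def add hom)
  have closed: "L \<in> N" if "\<forall>n. X n \<in> N" "(\<lambda>n. cnorm (X n - L)) \<longlonglongrightarrow> 0" for X L
    using bounded_functional_zero_limit[of f K X L] add bounded that by (simp add: N_def)
  obtain p where p: "p \<in> N" "\<And>v. v \<in> N \<Longrightarrow> cnorm (z - p) \<le> cnorm (z - v)"
    using nearest_point_in_closed_subspace[OF N] closed by blast
  define u where "u = z - p"
  have "f u \<noteq> 0"
    using p(1) \<open>f z \<noteq> 0\<close> by (simp add: u_def diff N_def)
  define r where "r = cinner u u"
  have "r \<noteq> 0"
    using \<open>f u \<noteq> 0\<close> hom[of 0 0] by (auto simp: r_def cinner_self_eq_zero)
  have "cinner u x = f x / f u * r" for x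
  proof -
    have "x - scaleC (f x / f u) u \<in> N"
      using \<open>f u \<noteq> 0\<close> by (simp add: N_def diff hom)
    then have "cinner u (x - scaleC (f x / f u) u) = 0"
      unfolding u_def by (rule nearest_point_orthogonal[OF N p(1) _ p(2)])
    then show ?thesis
      by (simp add: cinner_simps r_def)
  qed
  then have "f x = cinner (scaleC (cnj (f u / r)) u) x" for x
    using \<open>f u \<noteq> 0\<close> \<open>r \<noteq> 0\<close> by (simp add: cinner_scaleC_left)
  then show ?thesis
    using that by blast
qed

lemma adjoint_exists:
  assumes "bounded_op A"
  shows "\<exists>B. \<forall>x y. cinner (A x) y = cinner x (B y)"
proof -
  obtain K where add: "\<And>x y. A (x + y) = A x + A y"
    and hom: "\<And>c x. A (scaleC c x) = scaleC c (A x)" and bounded: "\<And>x. cnorm (A x) \<le> K * cnorm x"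
    using assms unfolding bounded_op_def by blast
  have "\<exists>u. \<forall>x. cinner y (A x) = cinner u x" for y
  proof -
    have "cmod (cinner y (A x)) \<le> (cnorm y * K) * cnorm x" for x
      using cauchy_schwarz[of y "A x"] mult_left_mono[OF bounded[of x] cnorm_nonneg[of y]]
      by (simp add: mult.assoc)
    then show ?thesis
      using riesz_representation[of "\<lambda>x. cinner y (A x)"]
      by (metis add hom cinner_add_right cinner_scaleC_right)
  qed
  then obtain B where "\<And>y x. cinner y (A x) = cinner (B y) x"
    by metis
  then have "cinner (A x) y = cinner x (B y)" for x y
    by (metis cinner_commute)
  then show ?thesis
    by blast
qed

lemma cinner_adjoint: "bounded_op A \<Longrightarrow> cinner (A x) y = cinner x (adjoint A y)"
  unfolding adjoint_def using someI_ex[OF adjoint_exists] by blast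

lemma adjoint_eqI:
  assumes "\<And>x y. cinner (A x) y = cinner x (B y)"
  shows "adjoint A = B"
proof -
  have "\<forall>x y. cinner (A x) y = cinner x (adjoint A y)"
    unfolding adjoint_def using someI[of "\<lambda>B. \<forall>x y. cinner (A x) y = cinner x (B y)"] assms by blast
  then show ?thesis
    using assms by (intro ext cinner_ext) metis
qed

section \<open>Words in bounded operators\<close>

lemma flip_exp_flip_exp [simp]: "flip_exp (flip_exp t) = t"
  by (cases t) simp_all

lemma flip_exp_neq [simp]: "flip_exp t \<noteq> t"
  by (cases t) simp_all

fun flip_letter :: "letter \<Rightarrow> letter" where
  "flip_letter (i, t) = (i, flip_exp t)"

lemma flip_letter_neq: "flip_letter a \<noteq> a"
  by (cases a) simp

lemma flip_letter_flip_letter [simp]: "flip_letter (flip_letter a) = a"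
  by (cases a) simp

lemma word_adj_eq_rev_map: "word_adj u = rev (map flip_letter u)"
  unfolding word_adj_def by (metis flip_letter.simps case_prod_conv surj_pair)

lemma word_adj_Nil [simp]: "word_adj [] = []"
  by (simp add: word_adj_eq_rev_map)

lemma word_adj_Cons [simp]: "word_adj (a # u) = word_adj u @ [flip_letter a]"
  by (simp add: word_adj_eq_rev_map)

lemma word_adj_append: "word_adj (u @ v) = word_adj v @ word_adj u"
  by (simp add: word_adj_eq_rev_map)

lemma word_adj_word_adj [simp]: "word_adj (word_adj u) = u"
  by (simp add: word_adj_eq_rev_map rev_map comp_def)

lemma length_word_adj [simp]: "length (word_adj u) = length u"
  by (simp add: word_adj_eq_rev_map)

lemma set_word_adj: "set (word_adj u) = flip_letter ` set u"
  by (simp add: word_adj_eq_rev_map)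

lemma nth_word_adj: "i < length u \<Longrightarrow> word_adj u ! i = flip_letter (u ! (length u - 1 - i))"
  by (simp add: word_adj_eq_rev_map rev_nth)

lemma eval_word_Nil [simp]: "eval_word A [] = id"
  by (simp add: eval_word_def)

lemma eval_word_Cons [simp]: "eval_word A ((i, t) # u) = apply_exp (A i) t \<circ> eval_word A u"
  by (simp add: eval_word_def)

lemma eval_word_append: "eval_word A (u @ v) = eval_word A u \<circ> eval_word A v"
  by (induction u) (auto simp: comp_assoc)

lemma cinner_apply_exp:
  "bounded_op A \<Longrightarrow> cinner (apply_exp A t x) y = cinner x (apply_exp A (flip_exp t) y)"
  by (cases t) (simp_all add: cinner_adjoint, metis cinner_adjoint cinner_commute)

lemma cinner_eval_word:
  assumes "\<forall>(i, t) \<in> set u. bounded_op (A i)"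
  shows "cinner (eval_word A u x) y = cinner x (eval_word A (word_adj u) y)"
  using assms
proof (induction u arbitrary: x y)
  case (Cons a u)
  obtain i t where "a = (i, t)"
    by fastforce
  with Cons show ?case
    by (simp add: cinner_apply_exp eval_word_append)
qed simp

lemma scaleC_commute_if_adjoint:
  assumes "\<And>x y. cinner (B x) y = cinner x (C y)"
  shows "C (scaleC c y) = scaleC c (C y)"
  using assms by (intro cinner_ext) (metis cinner_scaleC_right)

lemma eval_word_scaleC:
  assumes "\<forall>(i, t) \<in> set u. bounded_op (A i)"
  shows "eval_word A u (scaleC c x) = scaleC c (eval_word A u x)"
proof (rule scaleC_commute_if_adjoint)
  show "cinner (eval_word A (word_adj u) x) y = cinner x (eval_word A u y)" for x y
    using cinner_eval_word[of "word_adj u" A] assms by (force simp: set_word_adj)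
qed

lemma eigenvalue_comp_commute:
  assumes "eigenvalue (U \<circ> V) mu" "mu \<noteq> 0"
    and U: "\<And>c x. U (scaleC c x) = scaleC c (U x)" and V: "\<And>c x. V (scaleC c x) = scaleC c (V x)"
  shows "eigenvalue (V \<circ> U) mu"
proof -
  obtain x where "x \<noteq> 0" "U (V x) = scaleC mu x"
    using assms(1) by (auto simp: eigenvalue_def)
  moreover have "U 0 = 0"
    using U[of 0 0] by simp
  ultimately have "V x \<noteq> 0"
    using \<open>mu \<noteq> 0\<close> by auto
  moreover have "V (U (V x)) = scaleC mu (V x)"
    using \<open>U (V x) = scaleC mu x\<close> V by simp
  ultimately show ?thesis
    by (auto simp: eigenvalue_def)
qed

lemma eigenvalue_comp_adjoint_real:
  assumes "\<And>x y. cinner (B x) y = cinner x (C y)" and "eigenvalue (B \<circ> C) mu"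
  shows "mu \<in> \<real>"
proof -
  obtain v where "v \<noteq> 0" "B (C v) = scaleC mu v"
    using assms(2) by (auto simp: eigenvalue_def)
  then have "cinner (C v) (C v) = cnj mu * cinner v v"
    using assms(1)[of "C v" v] by (simp add: cinner_scaleC_left)
  then have "cnj mu = cinner (C v) (C v) / cinner v v"
    using \<open>v \<noteq> 0\<close> by (simp add: cinner_self_eq_zero)
  also have "\<dots> \<in> \<real>"
    by (simp add: cinner_self_eq_cnorm_sq)
  finally show ?thesis
    by (simp add: Reals_cnj_iff)
qed

lemma eigenvalue_eval_word_rotate:
  assumes "\<forall>(i, t) \<in> set w. bounded_op (A i)"
    and "eigenvalue (eval_word A w) mu" "mu \<noteq> 0"
  shows "eigenvalue (eval_word A (rotate j w)) mu"
proof -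
  define n where "n = j mod length w"
  have "eval_word A w = eval_word A (take n w) \<circ> eval_word A (drop n w)"
    by (metis append_take_drop_id eval_word_append)
  moreover have "eval_word A (rotate j w) = eval_word A (drop n w) \<circ> eval_word A (take n w)"
    by (simp add: n_def rotate_drop_take eval_word_append)
  moreover have "\<forall>(i, t) \<in> set (take n w). bounded_op (A i)" "\<forall>(i, t) \<in> set (drop n w). bounded_op (A i)"
    using assms(1) by (auto dest: in_set_takeD in_set_dropD)
  ultimately show ?thesis
    using eigenvalue_comp_commute assms(2,3) eval_word_scaleC by metis
qed

theorem real_eigenvalued_if_formally_self_adjoint:
  assumes "\<forall>(i, t) \<in> set w. i < l" and "formally_self_adjoint w"
  shows "real_eigenvalued TYPE('a::complex_hilbert) l w"
  unfolding real_eigenvalued_def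
proof (intro allI impI)
  fix A :: "nat \<Rightarrow> 'a \<Rightarrow> 'a" and mu
  assume "\<forall>i<l. bounded_op (A i)" and eigen: "eigenvalue (eval_word A w) mu"
  then have bounded: "\<forall>(i, t) \<in> set w. bounded_op (A i)"
    using assms(1) by auto
  obtain j L where rot: "rotate j w = L @ word_adj L"
    using assms(2) unfolding formally_self_adjoint_def Let_def by blast
  show "mu \<in> \<real>"
  proof (cases "mu = 0")
    case False
    have "\<forall>(i, t) \<in> set L. bounded_op (A i)"
      using bounded rot by (metis Un_iff set_append set_rotate)
    then have "cinner (eval_word A L x) y = cinner x (eval_word A (word_adj L) y)" for x y
      by (rule cinner_eval_word)
    moreover have "eigenvalue (eval_word A L \<circ> eval_word A (word_adj L)) mu"
      using eigenvalue_eval_word_rotate[OF bounded eigen False, of j] by (simp add: rot eval_word_append)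
    ultimately show ?thesis
      by (rule eigenvalue_comp_adjoint_real)
  qed simp
qed

section \<open>Cyclic words\<close>

definition cyclic_nth :: "'x list \<Rightarrow> int \<Rightarrow> 'x"
  where "cyclic_nth xs j = xs ! nat (j mod int (length xs))"

lemma cyclic_nth_cong: "[i = j] (mod int (length xs)) \<Longrightarrow> cyclic_nth xs i = cyclic_nth xs j"
  by (simp add: cyclic_nth_def cong_def)

lemma cyclic_nth_of_nat: "i < length xs \<Longrightarrow> cyclic_nth xs (int i) = xs ! i"
  by (simp add: cyclic_nth_def)

lemma nth_rotate_cyclic: "i < length xs \<Longrightarrow> rotate h xs ! i = cyclic_nth xs (int h + int i)"
  by (simp add: cyclic_nth_def nth_rotate add.commute flip: zmod_int of_nat_add)

lemma nth_word_adj_rotate: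
  assumes "j < length w"
  shows "word_adj (rotate h w) ! j = flip_letter (cyclic_nth w (int h - 1 - int j))"
proof -
  have "[int h + int (length w - 1 - j) = int h - 1 - int j] (mod int (length w))"
    using assms by (auto simp: cong_iff_dvd_diff algebra_simps)
  then have "cyclic_nth w (int h + int (length w - 1 - j)) = cyclic_nth w (int h - 1 - int j)"
    by (rule cyclic_nth_cong)
  then show ?thesis
    using assms by (simp add: nth_word_adj nth_rotate_cyclic)
qed

lemma formally_self_adjointI:
  assumes "even (length w)" "h < length w" "word_adj (rotate h w) = rotate h w"
  shows "formally_self_adjoint w"
proof -
  define u m where "u = rotate h w" and "m = length w div 2"
  have "length u - m = m"
    using assms(1) by (auto simp: u_def m_def)
  have "drop m u = drop m (word_adj (take m u @ drop m u))"
    using assms(3) by (simp add: u_def)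
  also have "\<dots> = word_adj (take m u)"
    using \<open>length u - m = m\<close> by (simp only: word_adj_append) simp
  finally have "u = take m u @ word_adj (take m u)"
    by (metis append_take_drop_id)
  then show ?thesis
    using assms(1,2) unfolding formally_self_adjoint_def u_def m_def Let_def by auto
qed

lemma exists_half_mod:
  fixes c k :: int
  assumes "odd k \<or> even c"
  shows "\<exists>q. [2 * q = c] (mod k)"
  using assms
proof
  assume "odd k"
  then have "2 * (c * ((k + 1) div 2)) = c + c * k"
    by (simp add: algebra_simps)
  then have "[2 * (c * ((k + 1) div 2)) = c] (mod k)"
    by (simp add: cong_def)
  then show ?thesis ..
next
  assume "even c"
  then have "[2 * (c div 2) = c] (mod k)"
    by simp
  then show ?thesis ..
qed

lemma word_adj_rotate_if_reflection:
  assumes reflect: "\<And>j. cyclic_nth w j = flip_letter (cyclic_nth w (c - j))"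
    and "[2 * int h = c + 1] (mod int (length w))"
  shows "word_adj (rotate h w) = rotate h w"
proof (rule nth_equalityI)
  fix i
  assume "i < length (word_adj (rotate h w))"
  moreover have "[c - (int h + int i) = int h - 1 - int i] (mod int (length w))"
    using assms(2) by (auto simp: cong_iff_dvd_diff algebra_simps)
  then have "cyclic_nth w (c - (int h + int i)) = cyclic_nth w (int h - 1 - int i)"
    by (rule cyclic_nth_cong)
  ultimately show "word_adj (rotate h w) ! i = rotate h w ! i"
    using reflect[of "int h + int i"] by (simp add: nth_word_adj_rotate nth_rotate_cyclic)
qed simp

text \<open>By \<open>nth_word_adj_rotate\<close>, the hypothesis says that the reflection \<open>j \<mapsto> h - 1 - j\<close>
  of the cycle of positions of \<open>w\<close> exchanges every letter with its flip. Such a reflection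
  has no fixed point, so the length of \<open>w\<close> is even and \<open>h - 1\<close> is odd, and the rotation of
  \<open>w\<close> whose midpoint lies on the axis of the reflection equals its own formal adjoint.\<close>
lemma formally_self_adjoint_if_adjoint_of_rotation:
  assumes "w \<noteq> []" and "word_adj (rotate h w) = w"
  shows "formally_self_adjoint w"
proof -
  define k c where "k = int (length w)" and "c = int h - 1"
  have reflect: "cyclic_nth w j = flip_letter (cyclic_nth w (c - j))" for j
  proof -
    define i where "i = nat (j mod k)"
    have "i < length w" "[int i = j] (mod k)"
      using assms(1) by (auto simp: i_def k_def cong_def nat_less_iff)
    moreover from this(2) have "[c - int i = c - j] (mod k)"
      by (simp add: cong_diff)
    ultimately show ?thesis
      using nth_word_adj_rotate[of i w h] assms(2)
      by (metis c_def cyclic_nth_cong cyclic_nth_of_nat k_def)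
  qed
  have "\<not> [2 * q = c] (mod k)" for q
  proof
    assume "[2 * q = c] (mod k)"
    then have "[c - q = q] (mod k)"
      by (simp add: cong_iff_dvd_diff dvd_diff_commute algebra_simps)
    then show False
      using reflect[of q] flip_letter_neq by (metis cyclic_nth_cong k_def)
  qed
  then have "\<not> (odd k \<or> even c)"
    using exists_half_mod[of k c] by blast
  then have "even k" "odd c"
    by simp_all
  define h' where "h' = nat (((c + 1) div 2) mod k)"
  have "0 < k"
    using assms(1) by (simp add: k_def)
  then have "h' < length w" "[int h' = (c + 1) div 2] (mod k)"
    by (simp_all add: h'_def k_def nat_less_iff cong_def)
  then have "[2 * int h' = 2 * ((c + 1) div 2)] (mod k)"
    using cong_scalar_left by blast
  moreover have "2 * ((c + 1) div 2) = c + 1"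
    using \<open>odd c\<close> by (intro even_two_times_div_two) simp
  ultimately have "[2 * int h' = c + 1] (mod k)"
    by simp
  then have "word_adj (rotate h' w) = rotate h' w"
    using word_adj_rotate_if_reflection[OF reflect] by (simp add: k_def)
  then show ?thesis
    using formally_self_adjointI \<open>even k\<close> \<open>h' < length w\<close> by (simp add: k_def)
qed

section \<open>Walks on a cycle\<close>

definition fmat_mult :: "nat \<Rightarrow> (nat \<Rightarrow> nat \<Rightarrow> 'b::semiring_0) \<Rightarrow> (nat \<Rightarrow> nat \<Rightarrow> 'b) \<Rightarrow> nat \<Rightarrow> nat \<Rightarrow> 'b"
  where "fmat_mult n M N p q = (\<Sum>m<n. M p m * N m q)"

definition fmat_one :: "nat \<Rightarrow> nat \<Rightarrow> 'b::{zero, one}"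
  where "fmat_one p q = (if p = q then 1 else 0)"

definition fmat_adjoint :: "(nat \<Rightarrow> nat \<Rightarrow> complex) \<Rightarrow> nat \<Rightarrow> nat \<Rightarrow> complex"
  where "fmat_adjoint M p q = cnj (M q p)"

lemma fmat_mult_nonneg:
  fixes M N :: "nat \<Rightarrow> nat \<Rightarrow> real"
  shows "(\<And>p q. 0 \<le> M p q) \<Longrightarrow> (\<And>p q. 0 \<le> N p q) \<Longrightarrow> 0 \<le> fmat_mult n M N p q"
  by (simp add: fmat_mult_def sum_nonneg)

lemma fmat_mult_neq_0E:
  assumes "fmat_mult n M N p q \<noteq> 0"
  obtains m where "m < n" "M p m \<noteq> 0" "N m q \<noteq> 0"
proof -
  obtain m where "m \<in> {..<n}" "M p m * N m q \<noteq> 0"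
    using assms unfolding fmat_mult_def by (meson sum.not_neutral_contains_not_neutral)
  then show ?thesis
    using that mult_not_zero by blast
qed

lemma fmat_mult_one_right:
  fixes M :: "nat \<Rightarrow> nat \<Rightarrow> 'b::semiring_1"
  shows "q < n \<Longrightarrow> fmat_mult n M fmat_one p q = M p q"
  by (simp add: fmat_mult_def fmat_one_def if_distrib cong: if_cong)

definition step_mat :: "letter list \<Rightarrow> letter \<Rightarrow> nat \<Rightarrow> nat \<Rightarrow> real"
  where "step_mat w a p q = (if q = Suc p mod length w \<and> w ! p = a then 1 else 0)"

definition cycle_angle :: "letter list \<Rightarrow> real"
  where "cycle_angle w = pi / (2 * length w)"

text \<open>The witness for a non-real eigenvalue; the angle makes
  \<open>cis (cycle_angle w) ^ length w = \<i>\<close>.\<close>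
definition var_mat :: "letter list \<Rightarrow> nat \<Rightarrow> nat \<Rightarrow> nat \<Rightarrow> complex"
  where "var_mat w i p q = cis (cycle_angle w) * of_real (step_mat w (i, One) p q)
                         + cnj (cis (cycle_angle w)) * of_real (step_mat w (i, Star) q p)"

fun letter_mat :: "letter list \<Rightarrow> letter \<Rightarrow> nat \<Rightarrow> nat \<Rightarrow> complex" where
  "letter_mat w (i, One) = var_mat w i"
| "letter_mat w (i, Star) = fmat_adjoint (var_mat w i)"

lemma letter_mat_eq:
  "letter_mat w a p q = cis (cycle_angle w) * of_real (step_mat w a p q)
                      + cnj (cis (cycle_angle w)) * of_real (step_mat w (flip_letter a) q p)"
proof -
  obtain i t where "a = (i, t)"
    by fastforce
  then show ?thesis
    by (cases t) (simp_all add: var_mat_def fmat_adjoint_def)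
qed

fun word_mat :: "letter list \<Rightarrow> letter list \<Rightarrow> nat \<Rightarrow> nat \<Rightarrow> complex" where
  "word_mat w [] = fmat_one"
| "word_mat w (a # u) = fmat_mult (length w) (letter_mat w a) (word_mat w u)"

text \<open>Expanding \<open>word_mat w u\<close> by \<open>letter_mat_eq\<close> gives one term per choice of direction at
  each letter: \<open>G p q\<close> counts the walks from \<open>p\<close> to \<open>q\<close> around the cycle of positions of
  \<open>w\<close> that read \<open>u\<close> with these directions, and \<open>r\<close> is their net displacement.\<close>
fun walk_terms :: "letter list \<Rightarrow> letter list \<Rightarrow> (int \<times> (nat \<Rightarrow> nat \<Rightarrow> real)) list" where
  "walk_terms w [] = [(0, fmat_one)]"
| "walk_terms w (a # u) =
     map (\<lambda>(r, G). (r + 1, fmat_mult (length w) (step_mat w a) G)) (walk_terms w u) @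
     map (\<lambda>(r, G). (r - 1, fmat_mult (length w) (\<lambda>p q. step_mat w (flip_letter a) q p) G))
       (walk_terms w u)"

lemma sum_sum_list_swap: "(\<Sum>m\<in>M. \<Sum>x\<leftarrow>xs. f m x) = (\<Sum>x\<leftarrow>xs. \<Sum>m\<in>M. f m x)"
  by (induction xs) (simp_all add: sum.distrib)

lemma word_mat_expansion:
  "word_mat w u p q = (\<Sum>(r, G)\<leftarrow>walk_terms w u. cis (of_int r * cycle_angle w) * of_real (G p q))"
proof (induction u arbitrary: p q)
  case Nil
  then show ?case
    by (simp add: fmat_one_def)
next
  case (Cons a u)
  define x where "x = cis (cycle_angle w)"
  define T where "T = (\<lambda>p q. step_mat w (flip_letter a) q p)"
  have x: "x * cis (of_int r * cycle_angle w) = cis (of_int (r + 1) * cycle_angle w)"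
    "cnj x * cis (of_int r * cycle_angle w) = cis (of_int (r - 1) * cycle_angle w)" for r :: int
    by (simp_all add: x_def cis_mult cis_cnj algebra_simps)
  have step: "(x * of_real (step_mat w a p m) + cnj x * of_real (T p m)) * (cis (of_int r * cycle_angle w) * of_real (G m q))
      = cis (of_int (r + 1) * cycle_angle w) * of_real (step_mat w a p m * G m q)
      + cis (of_int (r - 1) * cycle_angle w) * of_real (T p m * G m q)" for r G m
    unfolding x[symmetric] by (simp add: algebra_simps)
  have "word_mat w (a # u) p q
      = (\<Sum>m<length w. \<Sum>(r, G)\<leftarrow>walk_terms w u. (x * of_real (step_mat w a p m) + cnj x * of_real (T p m))
           * (cis (of_int r * cycle_angle w) * of_real (G m q)))"
    by (simp add: Cons.IH fmat_mult_def letter_mat_eq x_def T_def sum_list_const_mult case_prod_unfold)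
  also have "\<dots> = (\<Sum>(r, G)\<leftarrow>walk_terms w u.
           cis (of_int (r + 1) * cycle_angle w) * of_real (fmat_mult (length w) (step_mat w a) G p q)
         + cis (of_int (r - 1) * cycle_angle w) * of_real (fmat_mult (length w) T G p q))"
    unfolding sum_sum_list_swap case_prod_unfold step
    by (simp add: fmat_mult_def sum.distrib sum_distrib_left)
  also have "\<dots> = (\<Sum>(r, G)\<leftarrow>walk_terms w (a # u). cis (of_int r * cycle_angle w) * of_real (G p q))"
    by (simp add: sum_list_addf case_prod_unfold T_def o_def)
  finally show ?case .
qed

lemma walk_terms_nonneg: "(r, G) \<in> set (walk_terms w u) \<Longrightarrow> 0 \<le> G p q"
proof (induction u arbitrary: r G p q)
  case (Cons a u)
  then show ?case
    by (auto simp: step_mat_def intro!: fmat_mult_nonneg)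
qed (simp add: fmat_one_def)

lemma walk_terms_displacement_le: "(r, G) \<in> set (walk_terms w u) \<Longrightarrow> \<bar>r\<bar> \<le> int (length u)"
  by (induction u arbitrary: r G) fastforce+

lemma step_mat_neq_0: "step_mat w a p q \<noteq> 0 \<Longrightarrow> q = Suc p mod length w \<and> w ! p = a"
  by (simp add: step_mat_def split: if_splits)

lemma cong_Suc_mod: "[int (Suc p mod k) = int p + 1] (mod int k)"
  by (simp add: cong_def zmod_int add.commute)

lemma walk_terms_displacement_cong:
  assumes "(r, G) \<in> set (walk_terms w u)" "G p q \<noteq> 0"
  shows "[int q = int p + r] (mod int (length w))"
  using assms
proof (induction u arbitrary: r G p)
  case Nil
  then show ?case
    by (simp add: fmat_one_def split: if_splits)
next
  case (Cons a u)
  then obtain r' G' m where "(r', G') \<in> set (walk_terms w u)" "G' m q \<noteq> 0" and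
    step: "r = r' + 1 \<and> step_mat w a p m \<noteq> 0 \<or> r = r' - 1 \<and> step_mat w (flip_letter a) m p \<noteq> 0"
    by (auto elim!: fmat_mult_neq_0E)
  then have "int (length w) dvd int q - (int m + r')"
    using Cons.IH by (simp add: cong_iff_dvd_diff)
  moreover have "int (length w) dvd int m - int p - (r - r')"
    using step cong_Suc_mod[of p "length w"] cong_Suc_mod[of m "length w"]
    by (auto dest!: step_mat_neq_0 simp: cong_iff_dvd_diff dvd_diff_commute algebra_simps)
  ultimately have "int (length w) dvd (int q - (int m + r')) + (int m - int p - (r - r'))"
    by (rule dvd_add)
  then show ?case
    by (simp add: cong_iff_dvd_diff algebra_simps)
qed

lemma walk_terms_backward:
  assumes "(- int (length u), G) \<in> set (walk_terms w u)" "G p q \<noteq> 0" "j < length u"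
  shows "u ! j = flip_letter (cyclic_nth w (int p - 1 - int j))"
  using assms
proof (induction u arbitrary: G p j)
  case (Cons a u)
  then obtain G' m where G': "(- int (length u), G') \<in> set (walk_terms w u)" "G' m q \<noteq> 0"
    and "m < length w" "step_mat w (flip_letter a) m p \<noteq> 0"
    using walk_terms_displacement_le[of _ _ w u] by (fastforce elim!: fmat_mult_neq_0E)
  then have "a = flip_letter (w ! m)" "p = Suc m mod length w"
    by (auto dest: step_mat_neq_0)
  then have "int (length w) dvd (int m + 1) - int p"
    using cong_Suc_mod[of m "length w"] by (simp add: cong_iff_dvd_diff dvd_diff_commute)
  then have m: "[int m = int p - 1] (mod int (length w))"
    by (simp add: cong_iff_dvd_diff algebra_simps)
  then have "w ! m = cyclic_nth w (int p - 1)"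
    using \<open>m < length w\<close> by (simp add: cyclic_nth_of_nat[symmetric] cyclic_nth_cong)
  show ?case
  proof (cases j)
    case 0
    then show ?thesis
      using \<open>w ! m = cyclic_nth w (int p - 1)\<close> \<open>a = flip_letter (w ! m)\<close> by simp
  next
    case (Suc i)
    then have "u ! i = flip_letter (cyclic_nth w (int m - 1 - int i))"
      using Cons.IH[OF G'] Cons.prems(3) by simp
    moreover have "[int m - 1 - int i = int p - 1 - int j] (mod int (length w))"
      using m Suc by (auto simp: cong_iff_dvd_diff algebra_simps)
    ultimately show ?thesis
      using Suc by (simp add: cyclic_nth_cong)
  qed
qed simp

fun forward_walks :: "letter list \<Rightarrow> letter list \<Rightarrow> nat \<Rightarrow> nat \<Rightarrow> real" where
  "forward_walks w [] = fmat_one"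
| "forward_walks w (a # u) = fmat_mult (length w) (step_mat w a) (forward_walks w u)"

lemma forward_walks_in_walk_terms: "(int (length u), forward_walks w u) \<in> set (walk_terms w u)"
  by (induction u) force+

lemma forward_walks_ge_1:
  assumes "p < length w" "\<And>j. j < length u \<Longrightarrow> u ! j = cyclic_nth w (int p + int j)"
  shows "1 \<le> forward_walks w u p ((p + length u) mod length w)"
  using assms
proof (induction u arbitrary: p)
  case Nil
  then show ?case
    by (simp add: fmat_one_def)
next
  case (Cons a u)
  define m where "m = Suc p mod length w"
  have "m < length w"
    unfolding m_def using Cons.prems(1) by (intro mod_less_divisor) linarith
  have "step_mat w a p m = 1"
    using Cons.prems(2)[of 0] Cons.prems(1) by (auto simp: step_mat_def m_def cyclic_nth_of_nat)
  have "u ! j = cyclic_nth w (int m + int j)" if "j < length u" for j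
    using Cons.prems(2)[of "Suc j"] that cong_Suc_mod[of p "length w"]
    by (auto simp: m_def cong_iff_dvd_diff algebra_simps intro!: cyclic_nth_cong)
  then have "1 \<le> forward_walks w u m ((m + length u) mod length w)"
    using Cons.IH \<open>m < length w\<close> by blast
  also have "(m + length u) mod length w = (p + length (a # u)) mod length w"
    by (simp add: m_def mod_add_left_eq)
  also have "forward_walks w u m \<dots> = step_mat w a p m * forward_walks w u m \<dots>"
    by (simp add: \<open>step_mat w a p m = 1\<close>)
  also have "\<dots> \<le> forward_walks w (a # u) p ((p + length (a # u)) mod length w)"
    unfolding forward_walks.simps fmat_mult_def using \<open>m < length w\<close>
    by (intro member_le_sum mult_nonneg_nonneg walk_terms_nonneg[OF forward_walks_in_walk_terms])
       (auto simp: step_mat_def)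
  finally show ?case .
qed

lemma Im_sum_list: "Im (sum_list xs) = (\<Sum>x\<leftarrow>xs. Im x)"
  by (induction xs) simp_all

lemma int_dvd_abs_le_cases:
  fixes k r :: int
  assumes "k dvd r" "\<bar>r\<bar> \<le> k"
  shows "r = - k \<or> r = 0 \<or> r = k"
proof -
  obtain d where r: "r = k * d"
    using assms(1) by blast
  show ?thesis
  proof (cases "k > 0")
    case True
    then have "\<bar>d\<bar> \<le> 1"
      using assms(2) by (simp add: r abs_mult mult_le_cancel_left1)
    then have "d = -1 \<or> d = 0 \<or> d = 1"
      by auto
    then show ?thesis
      by (auto simp: r)
  qed (use assms(2) in auto)
qed

lemma Im_walk_term_trace_nonneg:
  assumes "w \<noteq> []" "\<not> formally_self_adjoint w" "(r, G) \<in> set (walk_terms w w)"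
  shows "0 \<le> sin (of_int r * cycle_angle w) * (\<Sum>p<length w. G p p)"
proof (cases "\<exists>p<length w. G p p \<noteq> 0")
  case True
  define k where "k = length w"
  obtain p where "p < k" "G p p \<noteq> 0"
    using True by (auto simp: k_def)
  then have "k dvd r"
    using walk_terms_displacement_cong[OF assms(3) \<open>G p p \<noteq> 0\<close>] by (simp add: k_def cong_iff_dvd_diff)
  moreover have "\<bar>r\<bar> \<le> k"
    using walk_terms_displacement_le[OF assms(3)] by (simp add: k_def)
  moreover have "r \<noteq> - k"
  proof
    assume "r = - k"
    then have "(- int (length w), G) \<in> set (walk_terms w w)"
      using assms(3) by (simp add: k_def)
    then have "word_adj (rotate p w) = w"
      using walk_terms_backward[where u = w and G = G and p = p and q = p] \<open>G p p \<noteq> 0\<close>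
      by (intro nth_equalityI) (simp_all add: nth_word_adj_rotate)
    then show False
      using formally_self_adjoint_if_adjoint_of_rotation assms(1,2) by blast
  qed
  ultimately have "r = 0 \<or> r = k"
    using int_dvd_abs_le_cases[of k r] by blast
  moreover have "sin (real k * cycle_angle w) = 1"
    using assms(1) by (simp add: k_def cycle_angle_def)
  ultimately show ?thesis
    using walk_terms_nonneg[OF assms(3)] by (auto simp: k_def intro!: sum_nonneg)
qed simp

lemma Im_trace_word_mat_ge_1:
  assumes "w \<noteq> []" and "\<not> formally_self_adjoint w"
  shows "1 \<le> Im (\<Sum>p<length w. word_mat w w p p)"
proof -
  define \<phi> where "\<phi> = (\<lambda>(r::int, G). sin (of_int r * cycle_angle w) * (\<Sum>p<length w. G p p))"
  have "1 \<le> forward_walks w w 0 0"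
    using forward_walks_ge_1[of 0 w w] assms(1) by (simp add: cyclic_nth_of_nat)
  also have "\<dots> \<le> (\<Sum>p<length w. forward_walks w w p p)"
    using assms(1) walk_terms_nonneg[OF forward_walks_in_walk_terms] by (intro member_le_sum) auto
  also have "\<dots> = \<phi> (length w, forward_walks w w)"
    using assms(1) by (simp add: \<phi>_def cycle_angle_def)
  also have "\<dots> \<le> (\<Sum>t\<leftarrow>walk_terms w w. \<phi> t)"
  proof (rule member_le_sum_list)
    show "\<phi> (length w, forward_walks w w) \<in> set (map \<phi> (walk_terms w w))"
      using forward_walks_in_walk_terms[of w w] by simp
    show "0 \<le> x" if "x \<in> set (map \<phi> (walk_terms w w))" for x
      using that Im_walk_term_trace_nonneg[OF assms] by (auto simp: \<phi>_def)
  qed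
  also have "\<dots> = Im (\<Sum>p<length w. word_mat w w p p)"
    by (simp add: word_mat_expansion sum_sum_list_swap Im_sum_list \<phi>_def case_prod_unfold
        sum_distrib_left o_def)
  finally show ?thesis .
qed

section \<open>Matrices acting on an orthonormal family\<close>

lemma diag_sum_mult_commute:
  fixes X Y :: "'b::comm_semiring_0 mat"
  assumes "X \<in> carrier_mat n m" "Y \<in> carrier_mat m n"
  shows "(\<Sum>i<n. (X * Y) $$ (i, i)) = (\<Sum>j<m. (Y * X) $$ (j, j))"
proof -
  have "(\<Sum>i<n. (X * Y) $$ (i, i)) = (\<Sum>i<n. \<Sum>j<m. X $$ (i, j) * Y $$ (j, i))"
    using assms by (intro sum.cong refl) (auto simp: scalar_prod_def lessThan_atLeast0)
  also have "\<dots> = (\<Sum>j<m. \<Sum>i<n. Y $$ (j, i) * X $$ (i, j))"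
    by (subst sum.swap) (simp add: mult.commute)
  also have "\<dots> = (\<Sum>j<m. (Y * X) $$ (j, j))"
    using assms by (intro sum.cong refl) (auto simp: scalar_prod_def lessThan_atLeast0)
  finally show ?thesis .
qed

lemma diag_sum_eq_sum_roots_char_poly:
  fixes A :: "complex mat"
  assumes A: "A \<in> carrier_mat n n" and cp: "char_poly A = (\<Prod>e\<leftarrow>es. [:- e, 1:])"
  shows "(\<Sum>p<n. A $$ (p, p)) = sum_list es"
proof -
  obtain B P Q where "schur_decomposition A es = (B, P, Q)"
    by (cases "schur_decomposition A es") auto
  with schur_decomposition[OF A cp] have "similar_mat_wit A B P Q" "diag_mat B = es"
    by auto
  then have B: "B \<in> carrier_mat n n" and PQ: "P \<in> carrier_mat n n" "Q \<in> carrier_mat n n"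
    and "Q * P = 1\<^sub>m n" "A = P * B * Q"
    using A by (auto simp: similar_mat_wit_def Let_def)
  then have "(\<Sum>p<n. A $$ (p, p)) = (\<Sum>p<n. (Q * (P * B)) $$ (p, p))"
    using diag_sum_mult_commute[of "P * B" n n Q] by auto
  also have "Q * (P * B) = B"
    using assoc_mult_mat[OF PQ(2,1) B, symmetric] \<open>Q * P = 1\<^sub>m n\<close> B by simp
  also have "(\<Sum>p<n. B $$ (p, p)) = sum_list es"
    using B \<open>diag_mat B = es\<close> by (auto simp: diag_mat_def sum_list_sum_nth lessThan_atLeast0)
  finally show ?thesis .
qed

lemma nonreal_eigenvector_if_Im_trace:
  fixes M :: "nat \<Rightarrow> nat \<Rightarrow> complex"
  assumes "Im (\<Sum>p<n. M p p) \<noteq> 0"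
  obtains mu r v where "Im mu \<noteq> 0" "r < n" "v r \<noteq> 0"
    "\<And>p. p < n \<Longrightarrow> (\<Sum>q<n. M p q * v q) = mu * v p"
proof -
  define A where "A = mat n n (\<lambda>(p, q). M p q)"
  have A: "A \<in> carrier_mat n n"
    by (simp add: A_def)
  obtain es where cp: "char_poly A = (\<Prod>e\<leftarrow>es. [:- e, 1:])"
    using char_poly_factorized[OF A] by blast
  have "(\<Sum>p<n. M p p) = sum_list es"
    using diag_sum_eq_sum_roots_char_poly[OF A cp] by (simp add: A_def)
  then have "Im (sum_list es) \<noteq> 0"
    using assms by metis
  then have "\<exists>mu\<in>set es. Im mu \<noteq> 0"
    by (induction es) auto
  then obtain mu where "mu \<in> set es" "Im mu \<noteq> 0"
    by blast
  then have "poly (char_poly A) mu = 0"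
    unfolding cp poly_prod_list by auto
  then have "Char_Poly.eigenvalue A mu"
    using eigenvalue_root_char_poly[OF A] by simp
  then obtain v where v: "v \<in> carrier_vec n" "v \<noteq> 0\<^sub>v n" "A *\<^sub>v v = mu \<cdot>\<^sub>v v"
    using A unfolding Char_Poly.eigenvalue_def eigenvector_def by auto
  have "\<exists>r<n. v $ r \<noteq> 0"
  proof (rule ccontr)
    assume "\<not> (\<exists>r<n. v $ r \<noteq> 0)"
    then have "v = 0\<^sub>v n"
      using v(1) by (intro eq_vecI) auto
    then show False
      using v(2) by contradiction
  qed
  then obtain r where "r < n" "v $ r \<noteq> 0"
    by blast
  moreover have "(\<Sum>q<n. M p q * v $ q) = mu * v $ p" if "p < n" for p
    using arg_cong[OF v(3), of "\<lambda>u. u $ p"] v(1) that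
    by (simp add: A_def scalar_prod_def lessThan_atLeast0)
  ultimately show ?thesis
    using that \<open>Im mu \<noteq> 0\<close> by blast
qed

definition orthonormal_family :: "(nat \<Rightarrow> 'a::complex_hilbert) \<Rightarrow> nat \<Rightarrow> bool"
  where "orthonormal_family e n \<longleftrightarrow> (\<forall>p<n. \<forall>q<n. cinner (e p) (e q) = (if p = q then 1 else 0))"

lemma cinner_orthonormal_sum:
  assumes "orthonormal_family e n" "r < n"
  shows "cinner (e r) (\<Sum>p<n. scaleC (c p) (e p)) = c r"
proof -
  have "cinner (e r) (\<Sum>p<n. scaleC (c p) (e p)) = (\<Sum>p<n. c p * cinner (e r) (e p))"
    by (simp add: cinner_sum_right cinner_scaleC_right)
  also have "\<dots> = (\<Sum>p<n. if p = r then c p else 0)"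
    using assms by (intro sum.cong refl) (auto simp: orthonormal_family_def)
  also have "\<dots> = c r"
    using assms(2) by simp
  finally show ?thesis .
qed

lemma orthonormal_family_exists:
  assumes "infinite_dimensional TYPE('a::complex_hilbert)"
  shows "\<exists>e :: nat \<Rightarrow> 'a. orthonormal_family e n"
proof (induction n)
  case 0
  then show ?case
    by (simp add: orthonormal_family_def)
next
  case (Suc n)
  then obtain e :: "nat \<Rightarrow> 'a" where e: "orthonormal_family e n"
    by blast
  obtain x :: 'a where x: "\<And>c. x \<noteq> (\<Sum>b\<in>e ` {..<n}. scaleC (c b) b)"
    using assms unfolding infinite_dimensional_def by blast
  have "inj_on e {..<n}"
    using e unfolding orthonormal_family_def inj_on_def by (metis lessThan_iff zero_neq_one)
  then have reindex: "(\<Sum>b\<in>e ` {..<n}. scaleC (cinner b x) b) = (\<Sum>p<n. scaleC (cinner (e p) x) (e p))"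
    by (simp add: sum.reindex)
  define y where "y = x - (\<Sum>p<n. scaleC (cinner (e p) x) (e p))"
  have "y \<noteq> 0"
    using x[of "\<lambda>b. cinner b x"] reindex by (simp add: y_def)
  have y_orth: "cinner (e q) y = 0" if "q < n" for q
    using cinner_orthonormal_sum[OF e that] by (simp add: y_def cinner_diff_right)
  define e' where "e' = e(n := scaleC (of_real (1 / cnorm y)) y)"
  have "cnorm (e' n) = 1"
    using \<open>y \<noteq> 0\<close> by (simp add: e'_def cnorm_scaleC norm_divide)
  then have "cinner (e' n) (e' n) = 1"
    by (simp add: cinner_self_eq_cnorm_sq)
  moreover have "cinner (e' q) (e' n) = 0" "cinner (e' n) (e' q) = 0" if "q < n" for q
    using y_orth[OF that] that by (simp_all add: e'_def cinner_scaleC_left cinner_scaleC_right,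
        metis cinner_commute complex_cnj_zero)
  ultimately have "orthonormal_family e' (Suc n)"
    using e by (auto simp: orthonormal_family_def less_Suc_eq e'_def)
  then show ?case
    by blast
qed

definition mat_op :: "(nat \<Rightarrow> 'a::complex_hilbert) \<Rightarrow> nat \<Rightarrow> (nat \<Rightarrow> nat \<Rightarrow> complex) \<Rightarrow> 'a \<Rightarrow> 'a"
  where "mat_op e n M x = (\<Sum>p<n. scaleC (\<Sum>q<n. M p q * cinner (e q) x) (e p))"

lemma mat_op_mult:
  assumes "orthonormal_family e n"
  shows "mat_op e n M (mat_op e n N x) = mat_op e n (fmat_mult n M N) x"
proof -
  have "(\<Sum>q<n. M p q * cinner (e q) (mat_op e n N x)) = (\<Sum>q<n. M p q * (\<Sum>r<n. N q r * cinner (e r) x))"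
    for p
    by (simp add: mat_op_def cinner_orthonormal_sum[OF assms])
  also have "\<dots> p = (\<Sum>r<n. fmat_mult n M N p r * cinner (e r) x)" for p
    unfolding fmat_mult_def sum_distrib_left sum_distrib_right mult.assoc by (rule sum.swap)
  finally show ?thesis
    by (simp add: mat_op_def)
qed

lemma cinner_mat_op: "cinner (mat_op e n M x) y = cinner x (mat_op e n (fmat_adjoint M) y)"
proof -
  have "cinner (mat_op e n M x) y = (\<Sum>p<n. \<Sum>q<n. cnj (M p q) * cinner x (e q) * cinner (e p) y)"
    by (simp add: mat_op_def cinner_sum_left cinner_scaleC_left sum_distrib_right cinner_commute[of x])
  also have "\<dots> = (\<Sum>q<n. \<Sum>p<n. cnj (M p q) * cinner x (e q) * cinner (e p) y)"
    by (rule sum.swap)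
  also have "\<dots> = cinner x (mat_op e n (fmat_adjoint M) y)"
    by (simp add: mat_op_def fmat_adjoint_def cinner_sum_right cinner_scaleC_right sum_distrib_left
        sum_distrib_right mult_ac)
  finally show ?thesis .
qed

lemma adjoint_mat_op: "adjoint (mat_op e n M) = mat_op e n (fmat_adjoint M)"
  by (rule adjoint_eqI) (rule cinner_mat_op)

lemma bounded_op_mat_op:
  assumes "orthonormal_family e n"
  shows "bounded_op (mat_op e n M)"
proof -
  have "cnorm (e p) = 1" if "p < n" for p
    using assms that by (simp add: orthonormal_family_def cnorm_def)
  then have coord: "cmod (cinner (e q) x) \<le> cnorm x" if "q < n" for q x
    using cauchy_schwarz[of "e q" x] that by simp
  have "cnorm (mat_op e n M x) \<le> (\<Sum>p<n. \<Sum>q<n. cmod (M p q)) * cnorm x" for x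
  proof -
    have "cnorm (mat_op e n M x) \<le> (\<Sum>p<n. cnorm (scaleC (\<Sum>q<n. M p q * cinner (e q) x) (e p)))"
      unfolding mat_op_def by (rule cnorm_sum_le)
    also have "\<dots> = (\<Sum>p<n. cmod (\<Sum>q<n. M p q * cinner (e q) x))"
      using \<open>\<And>p. p < n \<Longrightarrow> cnorm (e p) = 1\<close> by (simp add: cnorm_scaleC)
    also have "\<dots> \<le> (\<Sum>p<n. \<Sum>q<n. cmod (M p q) * cnorm x)"
      using coord by (intro sum_mono order_trans[OF norm_sum]) (simp add: norm_mult mult_left_mono)
    finally show ?thesis
      by (simp add: sum_distrib_right)
  qed
  moreover have "mat_op e n M (x + y) = mat_op e n M x + mat_op e n M y" for x y
    by (simp add: mat_op_def cinner_add_right distrib_left sum.distrib scaleC_add_left)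
  moreover have "mat_op e n M (scaleC c x) = scaleC c (mat_op e n M x)" for c x
    by (simp add: mat_op_def cinner_scaleC_right sum_distrib_left cvec.scale_sum_right mult_ac)
  ultimately show ?thesis
    unfolding bounded_op_def by blast
qed

lemma eigenvalue_mat_op:
  assumes "orthonormal_family e n" "r < n" "v r \<noteq> 0"
    and "\<And>p. p < n \<Longrightarrow> (\<Sum>q<n. M p q * v q) = mu * v p"
  shows "eigenvalue (mat_op e n M) mu"
proof -
  define x where "x = (\<Sum>p<n. scaleC (v p) (e p))"
  have "x \<noteq> 0"
    using cinner_orthonormal_sum[OF assms(1,2), of v] assms(3) by (auto simp: x_def)
  moreover have "mat_op e n M x = scaleC mu x"
    using assms(4) by (simp add: mat_op_def x_def cinner_orthonormal_sum[OF assms(1)]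
        cvec.scale_sum_right)
  ultimately show ?thesis
    by (auto simp: eigenvalue_def)
qed

lemma apply_exp_mat_op:
  "apply_exp (mat_op e (length w) (var_mat w i)) t = mat_op e (length w) (letter_mat w (i, t))"
  by (cases t) (simp_all add: adjoint_mat_op)

lemma eval_word_mat_op:
  assumes e: "orthonormal_family e (length w)" and "u \<noteq> []"
  shows "eval_word (\<lambda>i. mat_op e (length w) (var_mat w i)) u = mat_op e (length w) (word_mat w u)"
  using assms(2)
proof (induction u rule: list_nonempty_induct)
  case (single a)
  have "mat_op e (length w) (fmat_mult (length w) M fmat_one) = mat_op e (length w) M" for M
    by (intro ext) (simp add: mat_op_def fmat_mult_one_right)
  then show ?case
    by (cases a) (simp add: apply_exp_mat_op)
next
  case (cons a u)
  then show ?case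
    by (cases a) (simp add: apply_exp_mat_op mat_op_mult[OF e] fun_eq_iff)
qed

theorem not_real_eigenvalued_if_not_formally_self_adjoint:
  assumes "infinite_dimensional TYPE('a::complex_hilbert)"
    and "w \<noteq> []" and "\<not> formally_self_adjoint w"
  shows "\<not> real_eigenvalued TYPE('a) l w"
proof -
  define n where "n = length w"
  obtain e :: "nat \<Rightarrow> 'a" where e: "orthonormal_family e n"
    using orthonormal_family_exists[OF assms(1)] by blast
  define A where "A = (\<lambda>i. mat_op e n (var_mat w i))"
  have "1 \<le> Im (\<Sum>p<n. word_mat w w p p)"
    unfolding n_def using assms(2,3) by (rule Im_trace_word_mat_ge_1)
  then have "Im (\<Sum>p<n. word_mat w w p p) \<noteq> 0"
    by simp
  then obtain mu r v where "Im mu \<noteq> 0" and eigen: "r < n" "v r \<noteq> 0"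
    "\<And>p. p < n \<Longrightarrow> (\<Sum>q<n. word_mat w w p q * v q) = mu * v p"
    using nonreal_eigenvector_if_Im_trace[where M = "word_mat w w"] by blast
  then have "eigenvalue (mat_op e n (word_mat w w)) mu"
    using eigen by (intro eigenvalue_mat_op[OF e, of r v]) auto
  moreover have "eval_word A w = mat_op e n (word_mat w w)"
    using eval_word_mat_op[OF e[unfolded n_def] assms(2)] by (simp add: A_def n_def)
  moreover have "\<forall>i<l. bounded_op (A i)"
    by (simp add: A_def bounded_op_mat_op[OF e])
  ultimately show ?thesis
    using \<open>Im mu \<noteq> 0\<close> unfolding real_eigenvalued_def by (metis complex_is_Real_iff)
qed

theorem mainTheorem7:
  fixes l :: nat and w :: "letter list"
  assumes "infinite_dimensional TYPE('a::complex_hilbert)"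
    and "w \<noteq> []"
    and "\<forall>(i, t) \<in> set w. i < l"
  shows "real_eigenvalued TYPE('a) l w \<longleftrightarrow> formally_self_adjoint w"
  using real_eigenvalued_if_formally_self_adjoint[OF assms(3)]
    not_real_eigenvalued_if_not_formally_self_adjoint[OF assms(1,2)] by blast

end
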